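(* Let $N,G,N_t,K$ be positive integers ($K\ge 0$ integer), $T_s>0$, $\sigma>0$, and let $\boldsymbol s^{(g,n)}\in\mathbb C^{N_t}$ be known pilot vectors for $g=1,\dots,G$, $n=0,\dots,N-1$. Let $\boldsymbol\alpha(\theta)\triangleq[1,e^{-j\pi\sin\theta},\dots,e^{-j\pi(N_t-1)\sin\theta}]^{\mathrm T}\in\mathbb C^{N_t}$. For unknown deterministic parameters $\boldsymbol\tau^\star=[\tau^\star_0,\dots,\tau^\star_K]^{\mathrm T}$, $\boldsymbol\theta^\star_{\mathrm{Tx}}=[\theta^\star_{\mathrm{Tx},0},\dots,\theta^\star_{\mathrm{Tx},K}]^{\mathrm T}$, $\boldsymbol\gamma^\star=[\gamma^\star_0,\dots,\gamma^\star_K]^{\mathrm T}\in\mathbb C^{K+1}$ and $\boldsymbol\Delta=[\Delta_\tau,\Delta_\theta]^{\mathrm T}$, define $$\boldsymbol h^{(n)}=\sum_{k=0}^K\gamma^\star_k e^{-j2\pi n\tau^\star_k/(NT_s)}\boldsymbol\alpha(\theta^\star_{\mathrm{Tx},k})^{\mathrm H},\qquad \boldsymbol\Phi^{(n)}=e^{-j2\pi n\Delta_\tau/(NT_s)}\operatorname{diag}\big(\boldsymbol\alpha(\Delta_\theta)^{\mathrm H}\big),$$ and noise-free observations $u^{(g,n)}=\boldsymbol h^{(n)}\boldsymbol\Phi^{(n)}\boldsymbol s^{(g,n)}$, observed in i.i.d. $\mathcal{CN}(0,\sigma^2)$ noise. Let $\boldsymbol\chi=[(\boldsymbol\tau^\star)^{\mathrm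 T},(\boldsymbol\theta^\star_{\mathrm{Tx}})^{\mathrm T},\mathfrak R\{\boldsymbol\gamma^\star\}^{\mathrm T},\mathfrak I\{\boldsymbol\gamma^\star\}^{\mathrm T},\boldsymbol\Delta^{\mathrm T}]^{\mathrm T}\in\mathbb R^{4K+6}$ and let $$\boldsymbol J_{\boldsymbol\chi}=\frac{2}{\sigma^2}\sum_{n=0}^{N-1}\sum_{g=1}^G\mathfrak R\Big\{\big(\nabla_{\boldsymbol\chi}u^{(g,n)}\big)^{*}\big(\nabla_{\boldsymbol\chi}u^{(g,n)}\big)^{\mathrm T}\Big\}\in\mathbb R^{(4K+6)\times(4K+6)}$$ be the associated Fisher information matrix. Then $\boldsymbol J_{\boldsymbol\chi}$ is singular.
   Context: $\nabla_{\boldsymbol\chi}u^{(g,n)}$ denotes the column vector of partial derivatives of $u^{(g,n)}$ with respect to the entries of $\boldsymbol\chi$; $(\cdot)^*$ is entrywise complex conjugation and $(\cdot)^{\mathrm H}$ the conjugate transpose. This models an eavesdropper who knows the structure of the precoder $\boldsymbol\Phi^{(n)}$ but not the shift parameters $\boldsymbol\Delta$. *)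

theory Defs
  imports Complex_Main "Jordan_Normal_Form.Determinant"
begin

definition cderiv :: "(real \<Rightarrow> complex) \<Rightarrow> real \<Rightarrow> complex" where
  "cderiv f t = (SOME v. (f has_vector_derivative v) (at t))"

definition steer :: "real \<Rightarrow> nat \<Rightarrow> complex" where
  "steer \<theta> i = exp (- \<i> * complex_of_real (pi * real i * sin \<theta>))"

text \<open>Noise-free observation u^(g,n) as a function of the parameter vector chi
  (indexed 0..4K+5): tau_k = chi k, theta_k = chi (K+1+k),
  Re gamma_k = chi (2K+2+k), Im gamma_k = chi (3K+3+k),
  Delta_tau = chi (4K+4), Delta_theta = chi (4K+5).
  u = h^(n) Phi^(n) s^(g,n) written out entrywise, with
  h^(n)_i = sum_k gamma_k e^{-j 2 pi n tau_k/(N Ts)} conj(alpha(theta_k)_i) and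
  Phi^(n) = e^{-j 2 pi n Delta_tau/(N Ts)} diag(conj(alpha(Delta_theta))).\<close>
definition obs ::
  "nat \<Rightarrow> nat \<Rightarrow> nat \<Rightarrow> real \<Rightarrow> (nat \<Rightarrow> nat \<Rightarrow> nat \<Rightarrow> complex)
     \<Rightarrow> nat \<Rightarrow> nat \<Rightarrow> (nat \<Rightarrow> real) \<Rightarrow> complex" where
  "obs N Nt K Ts s g n \<chi> =
     (let \<tau> = (\<lambda>k. \<chi> k); \<theta> = (\<lambda>k. \<chi> (K + 1 + k));
          \<gamma> = (\<lambda>k. Complex (\<chi> (2*K + 2 + k)) (\<chi> (3*K + 3 + k)));
          d\<tau> = \<chi> (4*K + 4); d\<theta> = \<chi> (4*K + 5);
          h = (\<lambda>i. \<Sum>k\<le>K. \<gamma> k * exp (- \<i> * complex_of_real (2 * pi * real n * \<tau> k / (real N * Ts)))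
                              * cnj (steer (\<theta> k) i));
          \<Phi> = (\<lambda>i. exp (- \<i> * complex_of_real (2 * pi * real n * d\<tau> / (real N * Ts)))
                    * cnj (steer d\<theta> i))
      in \<Sum>i<Nt. h i * \<Phi> i * s g n i)"

definition grad_obs ::
  "nat \<Rightarrow> nat \<Rightarrow> nat \<Rightarrow> real \<Rightarrow> (nat \<Rightarrow> nat \<Rightarrow> nat \<Rightarrow> complex)
     \<Rightarrow> nat \<Rightarrow> nat \<Rightarrow> (nat \<Rightarrow> real) \<Rightarrow> nat \<Rightarrow> complex" where
  "grad_obs N Nt K Ts s g n \<chi> j = cderiv (\<lambda>t. obs N Nt K Ts s g n (\<chi>(j := t))) (\<chi> j)"

definition FIM ::
  "nat \<Rightarrow> nat \<Rightarrow> nat \<Rightarrow> nat \<Rightarrow> real \<Rightarrow> real \<Rightarrow> (nat \<Rightarrow> nat \<Rightarrow> nat \<Rightarrow> complex)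
     \<Rightarrow> (nat \<Rightarrow> real) \<Rightarrow> real mat" where
  "FIM N G Nt K Ts \<sigma> s \<chi> =
     mat (4*K + 6) (4*K + 6) (\<lambda>(a, b).
        2 / \<sigma>\<^sup>2 * (\<Sum>n<N. \<Sum>g\<in>{1..G}.
           Re (cnj (grad_obs N Nt K Ts s g n \<chi> a) * grad_obs N Nt K Ts s g n \<chi> b)))"

end

theory Submission
  imports Defs
begin

text \<open>The observations depend on the delays only through the products
  \<open>e(\<Delta>\<^sub>\<tau>) e(\<tau>\<^sub>k)\<close> of phase factors \<open>e(x) = exp(-j 2\<pi> n x / (N T\<^sub>s))\<close>,
  so shifting every \<open>\<tau>\<^sub>k\<close> by \<open>t\<close> and \<open>\<Delta>\<^sub>\<tau>\<close> by \<open>-t\<close> leaves all of them unchanged.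
  Differentiating, the partial derivative in \<open>\<Delta>\<^sub>\<tau>\<close> equals the sum of the partial
  derivatives in the \<open>\<tau>\<^sub>k\<close>, for every \<open>g\<close> and \<open>n\<close>. Hence the vector with entries
  \<open>1\<close> at the \<open>\<tau>\<^sub>k\<close>, \<open>-1\<close> at \<open>\<Delta>\<^sub>\<tau>\<close> and \<open>0\<close> elsewhere lies in the kernel of the
  Fisher information matrix.\<close>

lemma cderiv_eqI:
  assumes "(f has_vector_derivative v) (at t)"
  shows "cderiv f t = v"
  unfolding cderiv_def
proof (rule some_equality)
  fix w assume "(f has_vector_derivative w) (at t)"
  then have "(\<lambda>h. h *\<^sub>R w) = (\<lambda>h. h *\<^sub>R v)"
    using assms has_derivative_unique unfolding has_vector_derivative_def by blast
  then show "w = v" by (metis scaleR_one)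
qed (fact assms)

lemma cderiv_affine:
  assumes "(f has_vector_derivative v) (at t)"
  shows "cderiv (\<lambda>t. a * f t + b) t = a * v"
  using assms by (intro cderiv_eqI has_vector_derivative_add_const[THEN iffD2]
      has_vector_derivative_mult_right)

definition delay_phase :: "nat \<Rightarrow> nat \<Rightarrow> real \<Rightarrow> real \<Rightarrow> complex" where
  "delay_phase N n Ts x = exp (- \<i> * complex_of_real (2 * pi * real n * x / (real N * Ts)))"

lemma delay_phase_has_vector_derivative:
  "(delay_phase N n Ts has_vector_derivative
     - \<i> * of_real (2 * pi * real n / (real N * Ts)) * delay_phase N n Ts x) (at x)"
proof -
  define c where "c = complex_of_real (2 * pi * real n / (real N * Ts))"
  have "delay_phase N n Ts = (\<lambda>t. exp (- \<i> * (c * of_real t)))"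
    by (auto simp: delay_phase_def c_def)
  moreover have "((\<lambda>z. exp (- \<i> * (c * z))) has_field_derivative
      - \<i> * c * exp (- \<i> * (c * of_real x))) (at (of_real x))"
    by (auto intro!: derivative_eq_intros)
  ultimately show ?thesis
    using has_vector_derivative_real_field by (fastforce simp: c_def)
qed

text \<open>In the paper's notation \<open>\<gamma>\<^sub>k \<alpha>(\<theta>\<^sub>k)\<^sup>H diag(\<alpha>(\<Delta>\<^sub>\<theta>)\<^sup>H) s\<^sup>(\<^sup>g\<^sup>,\<^sup>n\<^sup>)\<close>.\<close>
definition path_gain ::
  "nat \<Rightarrow> nat \<Rightarrow> (nat \<Rightarrow> nat \<Rightarrow> nat \<Rightarrow> complex) \<Rightarrow> nat \<Rightarrow> nat \<Rightarrow> (nat \<Rightarrow> real) \<Rightarrow> nat \<Rightarrow> complex"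
where
  "path_gain Nt K s g n \<chi> k = (\<Sum>i<Nt. Complex (\<chi> (2*K + 2 + k)) (\<chi> (3*K + 3 + k))
       * cnj (steer (\<chi> (K + 1 + k)) i) * cnj (steer (\<chi> (4*K + 5)) i) * s g n i)"

lemma obs_eq_delay_phases:
  "obs N Nt K Ts s g n \<chi> =
     delay_phase N n Ts (\<chi> (4*K + 4)) * (\<Sum>k\<le>K. delay_phase N n Ts (\<chi> k) * path_gain Nt K s g n \<chi> k)"
  unfolding obs_def path_gain_def delay_phase_def Let_def
  by (simp add: sum_distrib_left sum_distrib_right mult_ac sum.swap[of _ "{..<Nt}"])

lemma path_gain_fun_upd_delay:
  assumes "j \<le> K \<or> j = 4*K + 4" and "k \<le> K"
  shows "path_gain Nt K s g n (\<chi>(j := t)) k = path_gain Nt K s g n \<chi> k"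
  using assms unfolding path_gain_def by auto

lemma grad_obs_delay:
  assumes "k0 \<le> K"
  shows "grad_obs N Nt K Ts s g n \<chi> k0 =
     delay_phase N n Ts (\<chi> (4*K + 4)) * path_gain Nt K s g n \<chi> k0
       * (- \<i> * of_real (2 * pi * real n / (real N * Ts)) * delay_phase N n Ts (\<chi> k0))"
proof -
  let ?e = "delay_phase N n Ts" and ?q = "path_gain Nt K s g n \<chi>"
  have "obs N Nt K Ts s g n (\<chi>(k0 := t)) =
      ?e (\<chi> (4*K + 4)) * ?q k0 * ?e t + ?e (\<chi> (4*K + 4)) * (\<Sum>k\<in>{..K} - {k0}. ?e (\<chi> k) * ?q k)"
    for t
  proof -
    have "(\<Sum>k\<le>K. ?e ((\<chi>(k0 := t)) k) * path_gain Nt K s g n (\<chi>(k0 := t)) k)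
        = (\<Sum>k\<le>K. ?e ((\<chi>(k0 := t)) k) * ?q k)"
      using assms by (intro sum.cong) (auto simp: path_gain_fun_upd_delay)
    also have "\<dots> = ?e t * ?q k0 + (\<Sum>k\<in>{..K} - {k0}. ?e (\<chi> k) * ?q k)"
      using assms by (subst sum.remove[of _ k0]) (auto intro!: sum.cong)
    finally show ?thesis
      using assms by (simp add: obs_eq_delay_phases algebra_simps)
  qed
  then show ?thesis
    unfolding grad_obs_def by (simp only: cderiv_affine[OF delay_phase_has_vector_derivative])
qed

lemma grad_obs_delay_shift:
  "grad_obs N Nt K Ts s g n \<chi> (4*K + 4) =
     - \<i> * of_real (2 * pi * real n / (real N * Ts)) * obs N Nt K Ts s g n \<chi>"
proof -
  let ?e = "delay_phase N n Ts" and ?q = "path_gain Nt K s g n \<chi>"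
  have "obs N Nt K Ts s g n (\<chi>(4*K + 4 := t)) = (\<Sum>k\<le>K. ?e (\<chi> k) * ?q k) * ?e t + 0" for t
  proof -
    have "(\<Sum>k\<le>K. ?e ((\<chi>(4*K + 4 := t)) k) * path_gain Nt K s g n (\<chi>(4*K + 4 := t)) k)
        = (\<Sum>k\<le>K. ?e (\<chi> k) * ?q k)"
      by (intro sum.cong) (auto simp: path_gain_fun_upd_delay)
    then show ?thesis by (simp add: obs_eq_delay_phases)
  qed
  then show ?thesis
    unfolding grad_obs_def
    by (simp only: cderiv_affine[OF delay_phase_has_vector_derivative])
      (simp add: obs_eq_delay_phases)
qed

lemma grad_obs_delay_shift_eq_sum:
  "grad_obs N Nt K Ts s g n \<chi> (4*K + 4) = (\<Sum>k\<le>K. grad_obs N Nt K Ts s g n \<chi> k)"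
  unfolding grad_obs_delay_shift obs_eq_delay_phases
  by (simp add: grad_obs_delay sum_distrib_left algebra_simps)

lemma Re_gram_mat_mult_vec_eq_0:
  fixes w :: "'i \<Rightarrow> nat \<Rightarrow> complex" and v :: "real vec"
  assumes "dim_vec v = m" and "\<And>x. x \<in> X \<Longrightarrow> (\<Sum>b<m. of_real (v $ b) * w x b) = 0"
  shows "mat m m (\<lambda>(a, b). c * (\<Sum>x\<in>X. Re (cnj (w x a) * w x b))) *\<^sub>v v = 0\<^sub>v m"
proof (rule eq_vecI)
  fix a assume "a < dim_vec (0\<^sub>v m)"
  then have "a < m" by simp
  then have "(mat m m (\<lambda>(a, b). c * (\<Sum>x\<in>X. Re (cnj (w x a) * w x b))) *\<^sub>v v) $ a
      = (\<Sum>b<m. c * (\<Sum>x\<in>X. Re (cnj (w x a) * w x b)) * v $ b)"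
    using assms(1) by (simp add: scalar_prod_def atLeast0LessThan)
  also have "\<dots> = c * (\<Sum>x\<in>X. Re (cnj (w x a) * (\<Sum>b<m. of_real (v $ b) * w x b)))"
    by (simp add: sum_distrib_left sum_distrib_right sum.swap[of _ X] algebra_simps)
  also have "\<dots> = 0"
    using assms(2) by simp
  finally show "(mat m m (\<lambda>(a, b). c * (\<Sum>x\<in>X. Re (cnj (w x a) * w x b))) *\<^sub>v v) $ a = 0\<^sub>v m $ a"
    using \<open>a < m\<close> by simp
qed (use assms(1) in simp)

lemma FIM_eq_Re_gram:
  "FIM N G Nt K Ts \<sigma> s \<chi> = mat (4*K + 6) (4*K + 6) (\<lambda>(a, b). 2 / \<sigma>\<^sup>2 *
     (\<Sum>p\<in>{..<N} \<times> {1..G}. Re (cnj (grad_obs N Nt K Ts s (snd p) (fst p) \<chi> a)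
                                  * grad_obs N Nt K Ts s (snd p) (fst p) \<chi> b)))"
  unfolding FIM_def sum.cartesian_product by (simp add: case_prod_beta')

definition delay_shift_vec :: "nat \<Rightarrow> real vec" where
  "delay_shift_vec K = vec (4*K + 6) (\<lambda>b. if b \<le> K then 1 else if b = 4*K + 4 then -1 else 0)"

lemma sum_delay_shift_vec:
  fixes z :: "nat \<Rightarrow> 'a :: real_algebra_1"
  shows "(\<Sum>b<4*K + 6. of_real (delay_shift_vec K $ b) * z b) = (\<Sum>k\<le>K. z k) - z (4*K + 4)"
proof -
  have "(\<Sum>b<4*K + 6. of_real (delay_shift_vec K $ b) * z b)
      = (\<Sum>b<4*K + 6. (if b \<in> {..K} then z b else 0) - (if b = 4*K + 4 then z b else 0))"
    by (intro sum.cong) (auto simp: delay_shift_vec_def)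
  also have "\<dots> = sum z ({..<4*K + 6} \<inter> {..K}) - z (4*K + 4)"
    by (simp add: sum_subtractf sum.inter_restrict)
  also have "{..<4*K + 6} \<inter> {..K} = {..K}"
    by auto
  finally show ?thesis .
qed

theorem proposition2:
  fixes N G Nt K :: nat and Ts \<sigma> :: real
    and s :: "nat \<Rightarrow> nat \<Rightarrow> nat \<Rightarrow> complex"
    and \<chi> :: "nat \<Rightarrow> real"
  assumes "N > 0" and "G > 0" and "Nt > 0" and "Ts > 0" and "\<sigma> > 0"
  shows "det (FIM N G Nt K Ts \<sigma> s \<chi>) = 0"
proof -
  let ?J = "FIM N G Nt K Ts \<sigma> s \<chi>" and ?v = "delay_shift_vec K"
  have "?J \<in> carrier_mat (4*K + 6) (4*K + 6)"
    by (simp add: FIM_def)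
  moreover have "?v \<in> carrier_vec (4*K + 6)"
    by (simp add: delay_shift_vec_def)
  moreover have "?v \<noteq> 0\<^sub>v (4*K + 6)"
  proof
    assume "?v = 0\<^sub>v (4*K + 6)"
    then have "?v $ 0 = 0" by simp
    then show False by (simp add: delay_shift_vec_def)
  qed
  moreover have "?J *\<^sub>v ?v = 0\<^sub>v (4*K + 6)"
    unfolding FIM_eq_Re_gram
  proof (rule Re_gram_mat_mult_vec_eq_0)
    show "dim_vec ?v = 4*K + 6"
      by (simp add: delay_shift_vec_def)
    show "(\<Sum>b<4*K + 6. of_real (?v $ b) * grad_obs N Nt K Ts s (snd p) (fst p) \<chi> b) = 0" for p
      by (simp add: sum_delay_shift_vec grad_obs_delay_shift_eq_sum)
  qed
  ultimately show ?thesis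
    using det_0_iff_vec_prod_zero by blast
qed

end
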